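(* Let $x,y$ be non-commuting indeterminates and $C=xyx^{-1}y^{-1}$. Let $(R_n)_{n\in\mathbb Z}$ be the solution of $$R_{n+1}CR_{n-1}=R_n^2+1\qquad(n\in\mathbb Z)$$ with $R_0=yxy^{-1}$ and $R_1=y$. Then for all $n\ge 0$, $R_n$ is a Laurent polynomial in $x,y$ with only non-negative integer coefficients.
   Context: Work in the free skew field (non-commutative rational functions) over $\mathbb C$ generated by $x,y$. A Laurent polynomial in $x,y$ is a $\mathbb Z$-linear combination of words in $x^{\pm1},y^{\pm1}$. *)

theory Defs
  imports Main
begin

text \<open>The free group on two generators x, y, realised by reduced words.
  A letter is a pair (g, e): g = False means generator x, g = True means y;
  e = False means the generator itself, e = True its inverse.\<close>

type_synonym letter = "bool \<times> bool"

definition inv_letter :: "letter \<Rightarrow> letter" where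
  "inv_letter a = (fst a, \<not> snd a)"

definition X :: letter where "X = (False, False)"
definition Xinv :: letter where "Xinv = (False, True)"
definition Y :: letter where "Y = (True, False)"
definition Yinv :: letter where "Yinv = (True, True)"

definition reduced :: "letter list \<Rightarrow> bool" where
  "reduced w \<longleftrightarrow> (\<forall>i. Suc i < length w \<longrightarrow> w ! Suc i \<noteq> inv_letter (w ! i))"

text \<open>Free reduction of a word (the group multiplication in the free group is
  \<open>red (u @ v)\<close>).\<close>
fun red :: "letter list \<Rightarrow> letter list" where
  "red [] = []"
| "red (a # w) = (case red w of [] \<Rightarrow> [a]
                   | b # v \<Rightarrow> (if b = inv_letter a then v else a # b # v))"

text \<open>Laurent polynomials in x, y with integer coefficients = the integral group
  ring of the free group: finitely supported integer-valued functions on reduced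
  words.\<close>
type_synonym laurent = "letter list \<Rightarrow> int"

definition is_laurent :: "laurent \<Rightarrow> bool" where
  "is_laurent f \<longleftrightarrow> finite {w. f w \<noteq> 0} \<and> (\<forall>w. f w \<noteq> 0 \<longrightarrow> reduced w)"

definition lmono :: "letter list \<Rightarrow> laurent" where
  "lmono w = (\<lambda>u. if u = red w then 1 else 0)"

definition lone :: laurent where
  "lone = lmono []"

definition ladd :: "laurent \<Rightarrow> laurent \<Rightarrow> laurent" where
  "ladd f g = (\<lambda>w. f w + g w)"

definition lmul :: "laurent \<Rightarrow> laurent \<Rightarrow> laurent" where
  "lmul f g = (\<lambda>w. \<Sum>(u, v) \<in> {(u, v). f u \<noteq> 0 \<and> g v \<noteq> 0 \<and> red (u @ v) = w}. f u * g v)"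

definition Ccomm :: laurent where
  "Ccomm = lmono [X, Y, Xinv, Yinv]"

end

theory Submission
  imports Defs "HOL-Library.Poly_Mapping"
begin

text \<open>
  Put R(n+1) = y A(n). The A(k) arise from the coupled recursion
  A(k+1) = (A(k) + B(k)) y^-1 x^-1 + A(k) y x^-1,  B(k+1) = (A(k) + B(k)) y^-1 x,
  A(0) = 1, B(0) = 0, whose coefficients are evidently non-negative, and which collapses
  to a linear right recurrence A(k+2) = A(k+1) P - A(k) Q. Since left and right
  multiplications commute, A also satisfies the left recurrence
  (Q c) A(k+2) = (P c) A(k+1) - c A(k), where c = x y x^-1 and Q c = y, as soon as it does
  for k = 0, 1. Playing the two recurrences against each other shows that
  A(k+2) c A(k) - A(k+1) y A(k+1) does not depend on k; it equals y^-1, and multiplying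
  by y on the left gives R(n+1) C R(n-1) = R(n)^2 + 1.
\<close>

section \<open>Free reduction\<close>

lemma inv_letter_inv_letter [simp]: "inv_letter (inv_letter a) = a"
  by (simp add: inv_letter_def)

lemma reduced_Nil [simp]: "reduced []"
  and reduced_singleton [simp]: "reduced [a]"
  by (simp_all add: reduced_def)

lemma reduced_Cons_Cons [simp]: "reduced (a # b # v) \<longleftrightarrow> b \<noteq> inv_letter a \<and> reduced (b # v)"
  by (auto simp: reduced_def nth_Cons split: nat.split)

lemma reduced_ConsD: "reduced (a # w) \<Longrightarrow> reduced w"
  by (cases w) simp_all

definition reduce_Cons :: "letter \<Rightarrow> letter list \<Rightarrow> letter list" where
  "reduce_Cons a r = (case r of [] \<Rightarrow> [a] | b # v \<Rightarrow> (if b = inv_letter a then v else a # b # v))"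

lemma reduce_Cons_inv_Cons [simp]: "reduce_Cons a (inv_letter a # r) = r"
  by (simp add: reduce_Cons_def)

lemma red_Cons: "red (a # w) = reduce_Cons a (red w)"
  by (simp add: reduce_Cons_def)

declare red.simps(2) [simp del]

lemma reduced_red: "reduced (red w)"
  by (induction w) (auto simp: red_Cons reduce_Cons_def split: list.split dest: reduced_ConsD)

lemma red_reduced: "reduced w \<Longrightarrow> red w = w"
proof (induction w)
  case (Cons a w)
  then show ?case
    by (cases w) (auto simp: red_Cons reduce_Cons_def dest: reduced_ConsD)
qed simp

lemma reduce_Cons_inv: "reduced r \<Longrightarrow> reduce_Cons a (reduce_Cons (inv_letter a) r) = r"
  by (cases r) (auto simp: reduce_Cons_def split: list.split)

lemma red_append_red_right: "red (u @ red v) = red (u @ v)"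
  by (induction u) (simp_all add: red_reduced reduced_red red_Cons)

lemma red_reduce_Cons_append: "red (reduce_Cons a r @ v) = reduce_Cons a (red (r @ v))"
proof (cases r)
  case (Cons b r')
  then show ?thesis
  proof (cases "b = inv_letter a")
    case True
    then show ?thesis
      using Cons reduce_Cons_inv[OF reduced_red, of a "r' @ v"] by (simp add: red_Cons)
  qed (simp add: reduce_Cons_def red_Cons)
qed (simp add: reduce_Cons_def red_Cons)

lemma red_append_red_left: "red (red u @ v) = red (u @ v)"
  by (induction u) (simp_all add: red_Cons red_reduce_Cons_append)

section \<open>The free group and its integral group ring\<close>

typedef fgroup = "{w :: letter list. reduced w}" morphisms word_of Abs_fgroup
  by (rule exI[of _ "[]"]) simp

lemma reduced_word_of [simp]: "reduced (word_of g)"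
  using word_of by auto

lemma word_of_Abs_fgroup_red [simp]: "word_of (Abs_fgroup (red w)) = red w"
  by (simp add: Abs_fgroup_inverse reduced_red)

text \<open>The group law is written additively: the convolution product on
  \<^typ>\<open>'a \<Rightarrow>\<^sub>0 'b\<close> requires a \<^class>\<open>monoid_add\<close> index type.\<close>

instantiation fgroup :: monoid_add
begin

definition zero_fgroup :: fgroup where "0 = Abs_fgroup []"

definition plus_fgroup :: "fgroup \<Rightarrow> fgroup \<Rightarrow> fgroup" where
  "g + h = Abs_fgroup (red (word_of g @ word_of h))"

instance
proof
  fix a b c :: fgroup
  show "a + b + c = a + (b + c)"
    by (simp add: plus_fgroup_def red_append_red_left red_append_red_right)
  show "0 + a = a" "a + 0 = a"
    by (simp_all add: plus_fgroup_def zero_fgroup_def Abs_fgroup_inverse red_reduced word_of_inverse)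
qed

end

lemma plus_Abs_fgroup:
  "reduced u \<Longrightarrow> reduced v \<Longrightarrow> Abs_fgroup u + Abs_fgroup v = Abs_fgroup (red (u @ v))"
  by (simp add: plus_fgroup_def Abs_fgroup_inverse)

type_synonym group_ring = "fgroup \<Rightarrow>\<^sub>0 int"

definition mon :: "letter list \<Rightarrow> group_ring" where
  "mon w = Poly_Mapping.single (Abs_fgroup (red w)) 1"

lemma mon_Nil: "mon [] = 1"
  by (simp add: mon_def zero_fgroup_def[symmetric])

lemma mon_mult: "mon u * mon v = mon (red (u @ v))"
  by (simp add: mon_def mult_single plus_Abs_fgroup reduced_red red_append_red_left
      red_append_red_right red_reduced)

lemma lookup_times_eq_sum:
  fixes p q :: "'a::monoid_add \<Rightarrow>\<^sub>0 'b::semiring_no_zero_divisors"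
  shows "Poly_Mapping.lookup (p * q) k =
    (\<Sum>(a, b)\<in>{(a, b). Poly_Mapping.lookup p a \<noteq> 0 \<and> Poly_Mapping.lookup q b \<noteq> 0 \<and> a + b = k}.
       Poly_Mapping.lookup p a * Poly_Mapping.lookup q b)"
proof -
  let ?f = "\<lambda>(a, b). Poly_Mapping.lookup p a * Poly_Mapping.lookup q b when k = a + b"
  have "Poly_Mapping.lookup (p * q) k = Sum_any ?f"
    by (simp add: times_poly_mapping.rep_eq prod_fun_unfold_prod)
  also have "\<dots> = sum ?f {x. ?f x \<noteq> 0}"
    by (rule Sum_any.expand_set)
  also have "{x. ?f x \<noteq> 0} =
      {(a, b). Poly_Mapping.lookup p a \<noteq> 0 \<and> Poly_Mapping.lookup q b \<noteq> 0 \<and> a + b = k}"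
    by (auto simp: when_def split: if_splits)
  finally show ?thesis
    by (auto simp: when_def intro!: sum.cong)
qed

section \<open>From the group ring to Laurent polynomials\<close>

definition laurent_of :: "group_ring \<Rightarrow> laurent" where
  "laurent_of p = (\<lambda>w. if reduced w then Poly_Mapping.lookup p (Abs_fgroup w) else 0)"

lemma laurent_of_add: "laurent_of (p + q) = ladd (laurent_of p) (laurent_of q)"
  by (auto simp: laurent_of_def ladd_def lookup_add)

lemma laurent_of_mon: "laurent_of (mon w) = lmono w"
  using reduced_red[of w]
  by (auto simp: laurent_of_def mon_def lmono_def lookup_single when_def Abs_fgroup_inject)

lemma laurent_of_one: "laurent_of 1 = lone"
  by (simp add: lone_def flip: laurent_of_mon mon_Nil)

lemma is_laurent_laurent_of: "is_laurent (laurent_of p)"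
proof -
  have "{w. laurent_of p w \<noteq> 0} \<subseteq> word_of ` {g. Poly_Mapping.lookup p g \<noteq> 0}"
    by (auto simp: laurent_of_def Abs_fgroup_inverse intro!: image_eqI[of _ _ "Abs_fgroup _"])
  then have "finite {w. laurent_of p w \<noteq> 0}"
    by (rule finite_subset) simp
  then show ?thesis
    by (auto simp: is_laurent_def laurent_of_def)
qed

lemma laurent_of_mult: "laurent_of (p * q) = lmul (laurent_of p) (laurent_of q)"
proof
  fix w
  let ?I = "{(a, b). Poly_Mapping.lookup p a \<noteq> 0 \<and> Poly_Mapping.lookup q b \<noteq> 0 \<and>
                     a + b = Abs_fgroup w}"
  let ?J = "{(u, v). laurent_of p u \<noteq> 0 \<and> laurent_of q v \<noteq> 0 \<and> red (u @ v) = w}"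
  show "laurent_of (p * q) w = lmul (laurent_of p) (laurent_of q) w"
  proof (cases "reduced w")
    case False
    then have "?J = {}"
      using reduced_red by auto
    then have "lmul (laurent_of p) (laurent_of q) w = 0"
      unfolding lmul_def \<open>?J = {}\<close> by simp
    then show ?thesis
      using False by (simp add: laurent_of_def)
  next
    case True
    have "laurent_of (p * q) w = (\<Sum>(a, b)\<in>?I. Poly_Mapping.lookup p a * Poly_Mapping.lookup q b)"
      using True by (simp add: laurent_of_def lookup_times_eq_sum)
    also have "\<dots> = (\<Sum>(u, v)\<in>?J. laurent_of p u * laurent_of q v)"
    proof (rule sum.reindex_bij_witness[where i = "map_prod Abs_fgroup Abs_fgroup"
          and j = "map_prod word_of word_of"])
      fix x assume "x \<in> ?I"
      then show "map_prod Abs_fgroup Abs_fgroup (map_prod word_of word_of x) = x"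
        and "map_prod word_of word_of x \<in> ?J"
        and "(\<lambda>(u, v). laurent_of p u * laurent_of q v) (map_prod word_of word_of x)
             = (\<lambda>(a, b). Poly_Mapping.lookup p a * Poly_Mapping.lookup q b) x"
        using True
        by (auto simp: laurent_of_def word_of_inverse plus_fgroup_def Abs_fgroup_inject reduced_red)
    next
      fix y assume "y \<in> ?J"
      then show "map_prod word_of word_of (map_prod Abs_fgroup Abs_fgroup y) = y"
        and "map_prod Abs_fgroup Abs_fgroup y \<in> ?I"
        by (auto simp: laurent_of_def Abs_fgroup_inverse plus_Abs_fgroup split: if_splits)
    qed
    finally show ?thesis
      by (simp add: lmul_def)
  qed
qed

lemma lmul_nonneg: "(\<And>w. 0 \<le> f w) \<Longrightarrow> (\<And>w. 0 \<le> g w) \<Longrightarrow> 0 \<le> lmul f g w"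
  unfolding lmul_def by (rule sum_nonneg) (auto intro: mult_nonneg_nonneg)

lemma laurent_of_mon_nonneg: "0 \<le> laurent_of (mon u) w"
  by (simp add: laurent_of_mon lmono_def)

lemma laurent_of_add_nonneg:
  "(\<And>w. 0 \<le> laurent_of p w) \<Longrightarrow> (\<And>w. 0 \<le> laurent_of q w) \<Longrightarrow> 0 \<le> laurent_of (p + q) w"
  by (simp add: laurent_of_add ladd_def)

lemma laurent_of_mult_nonneg:
  "(\<And>w. 0 \<le> laurent_of p w) \<Longrightarrow> (\<And>w. 0 \<le> laurent_of q w) \<Longrightarrow> 0 \<le> laurent_of (p * q) w"
  by (simp add: laurent_of_mult lmul_nonneg)

section \<open>Linear recurrences in a noncommutative ring\<close>

lemma coupled_recurrence_linear:
  fixes A B :: "nat \<Rightarrow> 'a::ring"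
  assumes A_Suc: "\<And>k. A (Suc k) = (A k + B k) * u + A k * v"
    and B_Suc: "\<And>k. B (Suc k) = (A k + B k) * w"
    and w_u: "w * u = u * z"
  shows "A (Suc (Suc k)) = A (Suc k) * (u + z + v) - A k * (v * z)"
proof -
  have "B (Suc k) * u = (A k + B k) * u * z"
    by (simp add: B_Suc w_u mult.assoc)
  also have "\<dots> = (A (Suc k) - A k * v) * z"
    by (simp add: A_Suc)
  finally show ?thesis
    by (simp add: A_Suc[of "Suc k"] algebra_simps)
qed

lemma right_recurrence_zero:
  fixes b :: "nat \<Rightarrow> 'a::ring"
  assumes "\<And>k. b (Suc (Suc k)) = b (Suc k) * P - b k * Q" and "b 0 = 0" and "b 1 = 0"
  shows "b k = 0"
proof -
  have "b k = 0 \<and> b (Suc k) = 0"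
    by (induction k) (use assms in auto)
  then show ?thesis ..
qed

text \<open>A solution of a right recurrence satisfies a left recurrence as soon as its first
  two instances hold: the defect sequence solves the right recurrence again.\<close>

lemma right_recurrence_left_form:
  fixes a :: "nat \<Rightarrow> 'a::ring"
  assumes rec: "\<And>k. a (Suc (Suc k)) = a (Suc k) * P - a k * Q"
    and "y * a 2 = L * a 1 - c * a 0"
    and "y * a 3 = L * a 2 - c * a 1"
  shows "y * a (Suc (Suc k)) = L * a (Suc k) - c * a k"
proof -
  define b where "b k = y * a (Suc (Suc k)) - L * a (Suc k) + c * a k" for k
  have "b k = 0"
  proof (rule right_recurrence_zero)
    show "b (Suc (Suc k)) = b (Suc k) * P - b k * Q" for k
      by (simp add: b_def rec[of "Suc (Suc k)"] rec[of "Suc k"] rec[of k] algebra_simps)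
    show "b 0 = 0" "b 1 = 0"
      using assms(2,3) by (simp_all add: b_def numeral_2_eq_2 numeral_3_eq_3)
  qed
  then show ?thesis
    by (simp add: b_def algebra_simps)
qed

lemma recurrence_invariant:
  fixes a :: "nat \<Rightarrow> 'a::ring"
  assumes rec: "\<And>k. a (Suc (Suc k)) = a (Suc k) * P - a k * Q"
    and left: "\<And>k. Q * c * a (Suc (Suc k)) = P * c * a (Suc k) - c * a k"
  shows "a (Suc (Suc k)) * c * a k - a (Suc k) * (Q * c) * a (Suc k)
       = a 2 * c * a 0 - a 1 * (Q * c) * a 1"
proof (induction k)
  case (Suc k)
  have "a (Suc (Suc (Suc k))) * c * a (Suc k) - a (Suc (Suc k)) * (Q * c) * a (Suc (Suc k))
      = (a (Suc (Suc k)) * (P * c) - a (Suc k) * (Q * c)) * a (Suc k)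
        - a (Suc (Suc k)) * (Q * c * a (Suc (Suc k)))"
    by (simp add: rec[of "Suc k"] algebra_simps)
  also have "\<dots> = (a (Suc (Suc k)) * (P * c) - a (Suc k) * (Q * c)) * a (Suc k)
        - a (Suc (Suc k)) * (P * c * a (Suc k) - c * a k)"
    by (simp only: left)
  also have "\<dots> = a (Suc (Suc k)) * c * a k - a (Suc k) * (Q * c) * a (Suc k)"
    by (simp add: algebra_simps)
  finally show ?case
    using Suc by simp
qed (simp add: numeral_2_eq_2)

lemmas letter_simps = X_def Xinv_def Y_def Yinv_def inv_letter_def red.simps reduce_Cons_def

fun seqA :: "nat \<Rightarrow> group_ring" and seqB :: "nat \<Rightarrow> group_ring" where
  "seqA 0 = 1"
| "seqA (Suc k) = (seqA k + seqB k) * mon [Yinv, Xinv] + seqA k * mon [Y, Xinv]"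
| "seqB 0 = 0"
| "seqB (Suc k) = (seqA k + seqB k) * mon [Yinv, X]"

lemma seqA_seqB_nonneg: "0 \<le> laurent_of (seqA k) w \<and> 0 \<le> laurent_of (seqB k) w"
proof (induction k arbitrary: w)
  case 0
  then show ?case
    by (simp add: laurent_of_def lookup_one when_def)
next
  case (Suc k)
  then show ?case
    by (simp add: laurent_of_add_nonneg laurent_of_mult_nonneg laurent_of_mon_nonneg)
qed

definition recP :: group_ring where
  "recP = mon [Yinv, Xinv] + mon [X, X, Yinv, Xinv] + mon [Y, Xinv]"
definition recQ :: group_ring where "recQ = mon [Y, X, Yinv, Xinv]"
definition conj_xy :: group_ring where "conj_xy = mon [X, Y, Xinv]"

lemma seqA_rec: "seqA (Suc (Suc k)) = seqA (Suc k) * recP - seqA k * recQ"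
proof -
  have w_u: "mon [Yinv, X] * mon [Yinv, Xinv] = mon [Yinv, Xinv] * mon [X, X, Yinv, Xinv]"
    and recQ_eq: "recQ = mon [Y, Xinv] * mon [X, X, Yinv, Xinv]"
    by (simp_all add: recQ_def mon_mult letter_simps)
  show ?thesis
    unfolding recP_def recQ_eq
    by (rule coupled_recurrence_linear[where A = seqA and B = seqB,
          OF seqA.simps(2) seqB.simps(2) w_u])
qed

lemma recQ_conj_xy: "recQ * conj_xy = mon [Y]"
  by (simp add: recQ_def conj_xy_def mon_mult letter_simps)

lemma seqA_left_rec:
  "recQ * conj_xy * seqA (Suc (Suc k)) = recP * conj_xy * seqA (Suc k) - conj_xy * seqA k"
  by (rule right_recurrence_left_form[where a = seqA, OF seqA_rec])
    (simp_all add: numeral_2_eq_2 numeral_3_eq_3 seqA_rec recP_def recQ_def conj_xy_def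
      algebra_simps mon_mult letter_simps)

lemma seqA_invariant:
  "seqA (Suc (Suc k)) * conj_xy * seqA k - seqA (Suc k) * mon [Y] * seqA (Suc k) = mon [Yinv]"
proof -
  have "seqA 2 * conj_xy * seqA 0 - seqA 1 * mon [Y] * seqA 1 = mon [Yinv]"
    by (simp add: numeral_2_eq_2 seqA_rec recP_def recQ_def conj_xy_def algebra_simps
        mon_mult letter_simps)
  then show ?thesis
    using recurrence_invariant[where a = seqA, OF seqA_rec seqA_left_rec, of k]
    by (simp add: recQ_conj_xy)
qed

fun Rseq :: "nat \<Rightarrow> group_ring" where
  "Rseq 0 = mon [Y, X, Yinv]"
| "Rseq (Suc n) = mon [Y] * seqA n"

lemma Rg_recurrence:
  "Rseq (Suc (Suc n)) * mon [X, Y, Xinv, Yinv] * Rseq n = Rseq (Suc n) * Rseq (Suc n) + 1"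
proof (cases n)
  case 0
  then show ?thesis
    by (simp add: algebra_simps mon_mult mon_Nil letter_simps)
next
  case (Suc m)
  have "Rseq (Suc (Suc n)) * mon [X, Y, Xinv, Yinv] * Rseq n
      = mon [Y] * (seqA (Suc (Suc m)) * (mon [X, Y, Xinv, Yinv] * mon [Y]) * seqA m)"
    by (simp add: Suc mult.assoc)
  also have "mon [X, Y, Xinv, Yinv] * mon [Y] = conj_xy"
    by (simp add: conj_xy_def mon_mult letter_simps)
  also have "seqA (Suc (Suc m)) * conj_xy * seqA m
      = mon [Yinv] + seqA (Suc m) * mon [Y] * seqA (Suc m)"
    using seqA_invariant[of m] by (simp add: algebra_simps)
  also have "mon [Y] * (mon [Yinv] + seqA (Suc m) * mon [Y] * seqA (Suc m))
      = Rseq (Suc n) * Rseq (Suc n) + 1"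
    by (simp add: Suc algebra_simps mon_mult mon_Nil letter_simps flip: mult.assoc)
  finally show ?thesis .
qed

lemma Rg_nonneg: "0 \<le> laurent_of (Rseq n) w"
  by (cases n) (simp_all add: laurent_of_mon_nonneg laurent_of_mult_nonneg seqA_seqB_nonneg)

theorem corollary3p4:
  shows "\<exists>R :: nat \<Rightarrow> laurent.
           R 0 = lmono [Y, X, Yinv] \<and> R 1 = lmono [Y] \<and>
           (\<forall>n\<ge>1. lmul (lmul (R (n + 1)) Ccomm) (R (n - 1)) = ladd (lmul (R n) (R n)) lone) \<and>
           (\<forall>n. is_laurent (R n) \<and> (\<forall>w. R n w \<ge> 0))"
proof (intro exI[of _ "\<lambda>n. laurent_of (Rseq n)"] conjI allI impI)
  show "laurent_of (Rseq 0) = lmono [Y, X, Yinv]" "laurent_of (Rseq 1) = lmono [Y]"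
    by (simp_all add: laurent_of_mon mon_Nil)
  fix n :: nat and w
  show "is_laurent (laurent_of (Rseq n))" "0 \<le> laurent_of (Rseq n) w"
    by (simp_all add: is_laurent_laurent_of Rg_nonneg)
  assume "1 \<le> n"
  then obtain m where n: "n = Suc m"
    by (cases n) auto
  have "laurent_of (Rseq (Suc (Suc m)) * mon [X, Y, Xinv, Yinv] * Rseq m)
      = laurent_of (Rseq (Suc m) * Rseq (Suc m) + 1)"
    using Rg_recurrence[of m] by (rule arg_cong)
  then show "lmul (lmul (laurent_of (Rseq (n + 1))) Ccomm) (laurent_of (Rseq (n - 1)))
             = ladd (lmul (laurent_of (Rseq n)) (laurent_of (Rseq n))) lone"
    unfolding n Ccomm_def laurent_of_add laurent_of_mult laurent_of_mon laurent_of_one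
    by (simp only: diff_Suc_1 Suc_eq_plus1[symmetric])
qed

end
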